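(* Let $G=(V,E)$ be a finite, connected, undirected graph with $n\ge2$ vertices and let $r>1$. Then the absorption time $\tau$ of the Moran process on $G$ with fitness $r$ (started from a single mutant at any vertex) satisfies $$\mathbb{E}[\tau]\le\frac{r}{r-1}n^3\phi(G)\le\frac{r}{r-1}n^4.$$
   Context: The Moran process on $G$ with mutant fitness $r>0$ is the Markov chain $(X_i)_{i\ge0}$ whose state $X_i\subseteq V$ is the set of vertices occupied by mutants; every other vertex is occupied by a non-mutant of fitness $1$. Write $W(S)=r|S|+|V\setminus S|$ for the total fitness. Given $X_i=S$, one step is: choose a vertex $x$ with probability $r/W(S)$ if $x\in S$ and $1/W(S)$ if $x\notin S$; then choose a neighbour $y$ of $x$ uniformly at random; set $X_{i+1}=S\cup\{y\}$ if $x\in S$ and $X_{i+1}=S\setminus\{y\}$ if $x\notin S$. The process starts from $X_0=\{x\}$ for a single vertex $x$. The absorption time is $\tau=\min\{i: X_i=\emptyset\text{ or }X_i=V\}$. For $X\subseteq V$, $\phi(X)=\sum_{x\in X}\frac{1}{\deg x}$, and $\phi(G)=\phi(V)$. *)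

theory Defs
  imports "HOL-Probability.Probability"
begin

definition simple_graph :: "'a set \<Rightarrow> ('a \<Rightarrow> 'a \<Rightarrow> bool) \<Rightarrow> bool" where
  "simple_graph V E \<longleftrightarrow> finite V \<and> (\<forall>x y. E x y \<longrightarrow> x \<in> V \<and> y \<in> V)
     \<and> (\<forall>x y. E x y \<longrightarrow> E y x) \<and> (\<forall>x. \<not> E x x)"

definition connected_graph :: "'a set \<Rightarrow> ('a \<Rightarrow> 'a \<Rightarrow> bool) \<Rightarrow> bool" where
  "connected_graph V E \<longleftrightarrow> (\<forall>u\<in>V. \<forall>v\<in>V. E\<^sup>*\<^sup>* u v)"

definition nbrs :: "('a \<Rightarrow> 'a \<Rightarrow> bool) \<Rightarrow> 'a \<Rightarrow> 'a set" where
  "nbrs E x = {y. E x y}"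

definition deg :: "('a \<Rightarrow> 'a \<Rightarrow> bool) \<Rightarrow> 'a \<Rightarrow> nat" where
  "deg E x = card (nbrs E x)"

definition phi :: "('a \<Rightarrow> 'a \<Rightarrow> bool) \<Rightarrow> 'a set \<Rightarrow> real" where
  "phi E X = (\<Sum>x\<in>X. 1 / real (deg E x))"

definition fitness_total :: "'a set \<Rightarrow> real \<Rightarrow> 'a set \<Rightarrow> real" where
  "fitness_total V r S = r * real (card S) + real (card (V - S))"

text \<open>The reproducing vertex x
  is chosen with probability r/W(S) if x \<in> S and 1/W(S) otherwise: first decide
  whether it is a mutant (probability r|S|/W(S)), then pick it uniformly within
  its class.  The states {} and V are automatically absorbing.\<close>
definition moran_step :: "'a set \<Rightarrow> ('a \<Rightarrow> 'a \<Rightarrow> bool) \<Rightarrow> real \<Rightarrow> 'a set \<Rightarrow> 'a set pmf" where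
  "moran_step V E r S =
     bind_pmf (bernoulli_pmf (r * real (card S) / fitness_total V r S)) (\<lambda>mut.
       if mut then
         bind_pmf (pmf_of_set S) (\<lambda>x. map_pmf (\<lambda>y. S \<union> {y}) (pmf_of_set (nbrs E x)))
       else
         bind_pmf (pmf_of_set (V - S)) (\<lambda>x. map_pmf (\<lambda>y. S - {y}) (pmf_of_set (nbrs E x))))"

primrec moran_dist :: "'a set \<Rightarrow> ('a \<Rightarrow> 'a \<Rightarrow> bool) \<Rightarrow> real \<Rightarrow> 'a \<Rightarrow> nat \<Rightarrow> 'a set pmf" where
  "moran_dist V E r x0 0 = return_pmf {x0}"
| "moran_dist V E r x0 (Suc i) = bind_pmf (moran_dist V E r x0 i) (moran_step V E r)"

text \<open>Expected absorption time E[tau] = sum over i of Pr(tau > i), where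
  tau > i iff X_i is neither {} nor V (these states are absorbing).  Taken in
  ennreal, so the value may be infinite a priori.\<close>
definition expected_absorption_time ::
  "'a set \<Rightarrow> ('a \<Rightarrow> 'a \<Rightarrow> bool) \<Rightarrow> real \<Rightarrow> 'a \<Rightarrow> ennreal" where
  "expected_absorption_time V E r x0 =
     (\<Sum>i. ennreal (measure_pmf.prob (moran_dist V E r x0 i) {S. S \<noteq> {} \<and> S \<noteq> V}))"

end

theory Submission
  imports Defs
begin

text \<open>The potential \<open>\<phi>(X\<^sub>i)\<close> stays in \<open>[0, \<phi>(G)]\<close>. From a state \<open>S\<close> it changes in one step
  by \<open>+1/deg y\<close> when a mutant \<open>x \<in> S\<close> replaces a neighbour \<open>y \<notin> S\<close> and by \<open>-1/deg y\<close> when a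
  non-mutant \<open>x \<notin> S\<close> replaces a neighbour \<open>y \<in> S\<close>; summing over vertices, every boundary edge
  \<open>xy\<close> contributes \<open>(r - 1) / (W(S) deg x deg y)\<close> to the expected change. A non-absorbing
  state of a connected graph has a boundary edge, degrees are at most \<open>n\<close> and \<open>W(S) \<le> r n\<close>,
  so the expected gain is at least \<open>(r - 1) / (r n\<^sup>3)\<close> as long as \<open>\<tau> > i\<close>. Summing
  \<open>Pr(\<tau> > i)\<close> over \<open>i\<close> therefore gives at most \<open>\<phi>(G) r n\<^sup>3 / (r - 1)\<close>, and \<open>\<phi>(G) \<le> n\<close>.\<close>

lemma nn_integral_pmf_of_set_real:
  assumes "finite A" "A \<noteq> {}" "\<And>x. x \<in> A \<Longrightarrow> 0 \<le> g x"
  shows "(\<integral>\<^sup>+x. ennreal (g x) \<partial>measure_pmf (pmf_of_set A)) = ennreal (sum g A / card A)"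
proof -
  have "(\<integral>\<^sup>+x. ennreal (g x) \<partial>measure_pmf (pmf_of_set A)) = ennreal (sum g A) / of_nat (card A)"
    using assms by (simp add: nn_integral_pmf_of_set sum_ennreal)
  also have "\<dots> = ennreal (sum g A / card A)"
    using assms by (subst ennreal_of_nat_eq_real_of_nat, subst divide_ennreal)
      (auto intro!: sum_nonneg simp: card_gt_0_iff)
  finally show ?thesis .
qed

lemma rtranclp_leaves_set:
  assumes "R\<^sup>*\<^sup>* u v" "u \<in> S" "v \<notin> S"
  shows "\<exists>x y. x \<in> S \<and> y \<notin> S \<and> R x y"
  using assms by (induction rule: rtranclp_induct) auto

lemma additive_drift_bound:
  fixes P :: "nat \<Rightarrow> 's pmf" and K :: "'s \<Rightarrow> 's pmf" and f :: "'s \<Rightarrow> real"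
  assumes chain: "\<And>i. P (Suc i) = bind_pmf (P i) K"
    and start: "set_pmf (P 0) \<subseteq> U" and closed: "\<And>s. s \<in> U \<Longrightarrow> set_pmf (K s) \<subseteq> U"
    and f_nonneg: "\<And>s. 0 \<le> f s" and f_le: "\<And>s. s \<in> U \<Longrightarrow> f s \<le> B"
    and "d > 0"
    and drift: "\<And>s. s \<in> U \<Longrightarrow> ennreal (f s + d * indicator A s) \<le> (\<integral>\<^sup>+t. f t \<partial>measure_pmf (K s))"
  shows "(\<Sum>i. ennreal (measure_pmf.prob (P i) A)) \<le> ennreal (B / d)"
proof -
  define F where "F i = (\<integral>\<^sup>+s. f s \<partial>measure_pmf (P i))" for i
  define q where "q i = measure_pmf.prob (P i) A" for i
  have support: "set_pmf (P i) \<subseteq> U" for i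
    by (induction i) (use start closed in \<open>auto simp: chain\<close>)
  have F_step: "F i + ennreal d * ennreal (q i) \<le> F (Suc i)" for i
  proof -
    have "F i + ennreal d * ennreal (q i) = (\<integral>\<^sup>+s. ennreal (f s + d * indicator A s) \<partial>measure_pmf (P i))"
      using \<open>d > 0\<close> f_nonneg
      by (simp add: F_def q_def ennreal_plus ennreal_mult nn_integral_add nn_integral_cmult
          ennreal_indicator measure_pmf.emeasure_eq_measure)
    also have "\<dots> \<le> (\<integral>\<^sup>+s. (\<integral>\<^sup>+t. f t \<partial>measure_pmf (K s)) \<partial>measure_pmf (P i))"
      using support by (intro nn_integral_mono_AE) (auto simp: AE_measure_pmf_iff intro!: drift)
    also have "\<dots> = F (Suc i)"
      by (simp add: F_def chain nn_integral_bind_pmf)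
    finally show ?thesis .
  qed
  have "ennreal d * (\<Sum>i<n. ennreal (q i)) \<le> F n" for n
  proof (induction n)
    case (Suc n)
    have "ennreal d * (\<Sum>i<Suc n. ennreal (q i)) \<le> F n + ennreal d * ennreal (q n)"
      using Suc by (simp add: distrib_left add_right_mono)
    also have "\<dots> \<le> F (Suc n)" by (rule F_step)
    finally show ?case .
  qed simp
  moreover have "F n \<le> ennreal B" for n
  proof -
    have "F n \<le> (\<integral>\<^sup>+s. ennreal B \<partial>measure_pmf (P n))"
      unfolding F_def using support
      by (intro nn_integral_mono_AE) (auto simp: AE_measure_pmf_iff intro!: ennreal_leI f_le)
    then show ?thesis by simp
  qed
  ultimately have "ennreal d * (\<Sum>i<n. ennreal (q i)) \<le> ennreal B" for n
    using order_trans by blast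
  moreover have "ennreal B = ennreal d * ennreal (B / d)"
    using \<open>d > 0\<close> by (simp flip: ennreal_mult')
  ultimately have partial: "(\<Sum>i<n. ennreal (q i)) \<le> ennreal (B / d)" for n
    using \<open>d > 0\<close> by (metis ennreal_eq_0_iff ennreal_mult_le_mult_iff ennreal_neq_top not_le)
  show ?thesis
    unfolding q_def[symmetric] suminf_eq_SUP by (intro SUP_least partial)
qed

lemma bernoulli_pmf_0: "bernoulli_pmf 0 = return_pmf False"
  by (rule pmf_eqI) (simp split: split_indicator)

lemma bernoulli_pmf_1: "bernoulli_pmf 1 = return_pmf True"
  by (rule pmf_eqI) (simp split: split_indicator)

lemma phi_nonneg: "0 \<le> phi E S"
  unfolding phi_def by (auto intro!: sum_nonneg)

lemma phi_insert:
  "finite S \<Longrightarrow> phi E (insert y S) = phi E S + (if y \<in> S then 0 else 1 / real (deg E y))"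
  by (simp add: phi_def insert_absorb)

lemma phi_remove:
  "finite S \<Longrightarrow> phi E (S - {y}) = phi E S - (if y \<in> S then 1 / real (deg E y) else 0)"
  by (simp add: phi_def sum_diff1)

locale moran_graph =
  fixes V :: "'a set" and E :: "'a \<Rightarrow> 'a \<Rightarrow> bool" and r :: real
  assumes simple: "simple_graph V E" and connected: "connected_graph V E"
    and two_vertices: "card V \<ge> 2" and fitter_mutant: "r > 1"
begin

lemma finite_V: "finite V"
  using simple by (simp add: simple_graph_def)

lemma V_nonempty: "V \<noteq> {}"
  using two_vertices by auto

lemma finite_subset_V: "S \<subseteq> V \<Longrightarrow> finite S"
  using finite_V finite_subset by blast

lemma nbrs_subset_V: "nbrs E x \<subseteq> V"
  using simple by (auto simp: simple_graph_def nbrs_def)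

lemma finite_nbrs: "finite (nbrs E x)"
  using nbrs_subset_V finite_subset_V by blast

lemma nbrs_nonempty:
  assumes "x \<in> V"
  shows "nbrs E x \<noteq> {}"
proof -
  obtain v where v: "v \<in> V" "v \<noteq> x"
    using two_vertices finite_V by (metis card_le_Suc0_iff_eq not_less_eq_eq numeral_2_eq_2)
  have "E\<^sup>*\<^sup>* x v"
    using connected assms v by (simp add: connected_graph_def)
  then obtain z where "E x z"
    using v(2) by (cases rule: converse_rtranclpE) auto
  then show ?thesis by (auto simp: nbrs_def)
qed

lemma deg_pos: "x \<in> V \<Longrightarrow> deg E x > 0"
  using nbrs_nonempty finite_nbrs by (simp add: deg_def card_gt_0_iff)

lemma deg_le_card: "deg E x \<le> card V"
  unfolding deg_def using nbrs_subset_V finite_V by (rule card_mono[rotated])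

lemma phi_le_card: "phi E V \<le> card V"
proof -
  have "phi E V \<le> (\<Sum>x\<in>V. 1)"
    unfolding phi_def by (intro sum_mono) (auto simp: divide_le_eq_1)
  then show ?thesis by simp
qed

lemma phi_le_phi_V: "S \<subseteq> V \<Longrightarrow> phi E S \<le> phi E V"
  unfolding phi_def using finite_V by (intro sum_mono2) auto

definition edge_weight :: "'a \<Rightarrow> 'a \<Rightarrow> real" where
  "edge_weight x y = (if E x y then 1 / (real (deg E x) * real (deg E y)) else 0)"

definition cut_weight :: "'a set \<Rightarrow> real" where
  "cut_weight S = (\<Sum>x\<in>S. \<Sum>y\<in>V - S. edge_weight x y)"

lemma edge_weight_nonneg: "0 \<le> edge_weight x y"
  by (simp add: edge_weight_def)

lemma edge_weight_sym: "edge_weight x y = edge_weight y x"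
  using simple by (auto simp: edge_weight_def simple_graph_def mult.commute)

lemma cut_weight_nonneg: "0 \<le> cut_weight S"
  unfolding cut_weight_def by (intro sum_nonneg edge_weight_nonneg)

lemma edge_weight_le: "edge_weight x y \<le> 1 / real (deg E y)"
proof (cases "E x y")
  case True
  then have "x \<in> V" "y \<in> V"
    using simple by (auto simp: simple_graph_def)
  then have "1 \<le> real (deg E x)" "0 < real (deg E y)"
    using deg_pos by (auto simp: Suc_le_eq)
  with True show ?thesis
    by (auto simp: edge_weight_def intro!: divide_left_mono)
qed (simp add: edge_weight_def)

lemma sum_edge_weight_le_phi: "(\<Sum>y\<in>S. edge_weight x y) \<le> phi E S"
  unfolding phi_def by (intro sum_mono edge_weight_le)

lemma cut_weight_complement: "(\<Sum>x\<in>V - S. \<Sum>y\<in>S. edge_weight x y) = cut_weight S"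
  unfolding cut_weight_def by (subst sum.swap) (simp add: edge_weight_sym)

lemma cut_weight_le: "cut_weight S \<le> real (card (V - S)) * phi E S"
proof -
  have "cut_weight S \<le> (\<Sum>x\<in>V - S. phi E S)"
    unfolding cut_weight_complement[symmetric] by (intro sum_mono sum_edge_weight_le_phi)
  then show ?thesis by simp
qed

lemma sum_edge_weight:
  assumes "B \<subseteq> V"
  shows "(\<Sum>y\<in>B. edge_weight x y) = (\<Sum>y\<in>nbrs E x \<inter> B. 1 / real (deg E y)) / real (deg E x)"
proof -
  have "(\<Sum>y\<in>B. edge_weight x y) = (\<Sum>y\<in>B \<inter> nbrs E x. 1 / (real (deg E x) * real (deg E y)))"
    using finite_subset_V[OF assms]
    by (simp add: edge_weight_def sum.inter_restrict) (simp add: nbrs_def)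
  then show ?thesis
    by (simp add: sum_divide_distrib Int_commute mult.commute)
qed

lemma mean_phi_insert_nbr:
  assumes "x \<in> V" "S \<subseteq> V"
  shows "(\<Sum>y\<in>nbrs E x. phi E (insert y S)) / real (deg E x)
       = phi E S + (\<Sum>y\<in>V - S. edge_weight x y)"
proof -
  have "(\<Sum>y\<in>nbrs E x. phi E (insert y S))
      = real (deg E x) * phi E S + (\<Sum>y\<in>nbrs E x - S. 1 / real (deg E y))"
    using finite_subset_V[OF assms(2)] finite_nbrs
    by (simp add: phi_insert sum.distrib sum.If_cases deg_def Diff_eq)
  moreover have "nbrs E x \<inter> (V - S) = nbrs E x - S"
    using nbrs_subset_V by blast
  ultimately show ?thesis
    using deg_pos[OF assms(1)] by (simp add: sum_edge_weight field_simps)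
qed

lemma mean_phi_remove_nbr:
  assumes "x \<in> V" "S \<subseteq> V"
  shows "(\<Sum>y\<in>nbrs E x. phi E (S - {y})) / real (deg E x)
       = phi E S - (\<Sum>y\<in>S. edge_weight x y)"
proof -
  have "(\<Sum>y\<in>nbrs E x. phi E (S - {y}))
      = real (deg E x) * phi E S - (\<Sum>y\<in>nbrs E x \<inter> S. 1 / real (deg E y))"
    using finite_subset_V[OF assms(2)] finite_nbrs
    by (simp add: phi_remove sum_subtractf sum.If_cases deg_def)
  then show ?thesis
    using deg_pos[OF assms(1)] assms(2) by (simp add: sum_edge_weight field_simps)
qed

lemma set_pmf_of_nbrs: "x \<in> V \<Longrightarrow> set_pmf (pmf_of_set (nbrs E x)) = nbrs E x"
  using nbrs_nonempty finite_nbrs by simp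

lemma moran_step_empty: "moran_step V E r {} = return_pmf {}"
  by (simp add: moran_step_def bernoulli_pmf_0 bind_return_pmf map_pmf_const bind_pmf_const)

lemma moran_step_V: "moran_step V E r V = return_pmf V"
proof -
  have certain_mutant: "r * real (card V) / fitness_total V r V = 1"
    using two_vertices fitter_mutant by (simp add: fitness_total_def)
  have "moran_step V E r V
      = bind_pmf (pmf_of_set V) (\<lambda>x. map_pmf (\<lambda>y. V \<union> {y}) (pmf_of_set (nbrs E x)))"
    unfolding moran_step_def certain_mutant by (simp add: bernoulli_pmf_1 bind_return_pmf)
  also have "\<dots> = bind_pmf (pmf_of_set V) (\<lambda>_. return_pmf V)"
  proof (rule bind_pmf_cong)
    fix x assume "x \<in> set_pmf (pmf_of_set V)"
    then have "x \<in> V"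
      using V_nonempty finite_V by auto
    then show "map_pmf (\<lambda>y. V \<union> {y}) (pmf_of_set (nbrs E x)) = return_pmf V"
      using set_pmf_of_nbrs nbrs_subset_V
      by (subst map_pmf_cong[where g = "\<lambda>_. V"]) (auto simp: map_pmf_const)
  qed simp
  finally show ?thesis
    by (simp add: bind_pmf_const)
qed

lemma set_pmf_moran_step:
  assumes "S \<subseteq> V"
  shows "set_pmf (moran_step V E r S) \<subseteq> Pow V"
proof (cases "S = {} \<or> S = V")
  case True
  then show ?thesis
    using assms by (auto simp: moran_step_empty moran_step_V)
next
  case False
  then have "S \<noteq> {}" "V - S \<noteq> {}"
    using assms by auto
  then have "set_pmf (pmf_of_set S) = S" "set_pmf (pmf_of_set (V - S)) = V - S"
    using finite_subset_V[OF assms] finite_V by simp_all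
  moreover have "set_pmf (pmf_of_set (nbrs E x)) \<subseteq> V" if "x \<in> V" for x
    using that set_pmf_of_nbrs nbrs_subset_V by simp
  ultimately show ?thesis
    using assms by (fastforce simp: moran_step_def split: if_splits)
qed

lemma nn_integral_random_nbr:
  assumes "x \<in> V" "\<And>y. 0 \<le> g y"
  shows "(\<integral>\<^sup>+y. ennreal (g y) \<partial>measure_pmf (pmf_of_set (nbrs E x)))
       = ennreal ((\<Sum>y\<in>nbrs E x. g y) / real (deg E x))"
  using nn_integral_pmf_of_set_real[OF finite_nbrs nbrs_nonempty[OF assms(1)]] assms(2)
  by (simp add: deg_def)

lemma nn_integral_mutant_reproduces:
  assumes "S \<subseteq> V" "S \<noteq> {}"
  shows "(\<integral>\<^sup>+T. ennreal (phi E T) \<partial>measure_pmf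
            (bind_pmf (pmf_of_set S) (\<lambda>x. map_pmf (\<lambda>y. S \<union> {y}) (pmf_of_set (nbrs E x)))))
       = ennreal (phi E S + cut_weight S / real (card S))"
proof -
  have "(\<integral>\<^sup>+y. ennreal (phi E (S \<union> {y})) \<partial>measure_pmf (pmf_of_set (nbrs E x)))
      = ennreal (phi E S + (\<Sum>y\<in>V - S. edge_weight x y))" if "x \<in> S" for x
    using that assms by (simp add: nn_integral_random_nbr phi_nonneg mean_phi_insert_nbr subsetD)
  then have "(\<integral>\<^sup>+T. ennreal (phi E T) \<partial>measure_pmf
            (bind_pmf (pmf_of_set S) (\<lambda>x. map_pmf (\<lambda>y. S \<union> {y}) (pmf_of_set (nbrs E x)))))
      = (\<integral>\<^sup>+x. ennreal (phi E S + (\<Sum>y\<in>V - S. edge_weight x y)) \<partial>measure_pmf (pmf_of_set S))"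
    unfolding nn_integral_bind_pmf nn_integral_map_pmf
    using assms finite_subset_V[OF assms(1)]
    by (intro nn_integral_cong_AE) (simp add: AE_measure_pmf_iff)
  also have "\<dots> = ennreal (phi E S + cut_weight S / real (card S))"
    using assms finite_subset_V[OF assms(1)]
    by (subst nn_integral_pmf_of_set_real)
      (auto simp: phi_nonneg edge_weight_nonneg sum_nonneg sum.distrib cut_weight_def
        add_divide_distrib)
  finally show ?thesis .
qed

lemma nn_integral_resident_reproduces:
  assumes "S \<subseteq> V" "S \<noteq> V"
  shows "(\<integral>\<^sup>+T. ennreal (phi E T) \<partial>measure_pmf
            (bind_pmf (pmf_of_set (V - S)) (\<lambda>x. map_pmf (\<lambda>y. S - {y}) (pmf_of_set (nbrs E x)))))
       = ennreal (phi E S - cut_weight S / real (card (V - S)))"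
proof -
  have "(\<integral>\<^sup>+y. ennreal (phi E (S - {y})) \<partial>measure_pmf (pmf_of_set (nbrs E x)))
      = ennreal (phi E S - (\<Sum>y\<in>S. edge_weight x y))" if "x \<in> V - S" for x
    using that assms by (simp add: nn_integral_random_nbr phi_nonneg mean_phi_remove_nbr)
  then have "(\<integral>\<^sup>+T. ennreal (phi E T) \<partial>measure_pmf
            (bind_pmf (pmf_of_set (V - S)) (\<lambda>x. map_pmf (\<lambda>y. S - {y}) (pmf_of_set (nbrs E x)))))
      = (\<integral>\<^sup>+x. ennreal (phi E S - (\<Sum>y\<in>S. edge_weight x y)) \<partial>measure_pmf (pmf_of_set (V - S)))"
    unfolding nn_integral_bind_pmf nn_integral_map_pmf
    using assms finite_V
    by (intro nn_integral_cong_AE) (auto simp: AE_measure_pmf_iff)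
  also have "\<dots> = ennreal (phi E S - cut_weight S / real (card (V - S)))"
    using assms finite_V
    by (subst nn_integral_pmf_of_set_real)
      (auto simp: sum_edge_weight_le_phi sum_subtractf cut_weight_complement diff_divide_distrib)
  finally show ?thesis .
qed

lemma card_V_split: "S \<subseteq> V \<Longrightarrow> real (card V) = real (card S) + real (card (V - S))"
  using finite_V by (simp add: card_Diff_subset card_mono finite_subset_V)

lemma fitness_total_pos:
  assumes "S \<subseteq> V"
  shows "fitness_total V r S > 0"
proof -
  have "real (card V) = real (card S) + real (card (V - S))"
    using card_V_split[OF assms] .
  moreover have "real (card S) \<le> r * real (card S)"
    using fitter_mutant by (simp add: mult_le_cancel_right1)
  moreover have "card V > 0"
    using two_vertices by simp
  ultimately show ?thesis
    unfolding fitness_total_def by linarith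
qed

lemma nn_integral_moran_step:
  assumes "S \<subseteq> V"
  shows "(\<integral>\<^sup>+T. ennreal (phi E T) \<partial>measure_pmf (moran_step V E r S))
       = ennreal (phi E S + (r - 1) * cut_weight S / fitness_total V r S)"
proof (cases "S = {} \<or> S = V")
  case True
  then show ?thesis
    by (auto simp: moran_step_empty moran_step_V cut_weight_def phi_def)
next
  case False
  define W where "W = fitness_total V r S"
  define p where "p = r * real (card S) / W"
  have card_S: "real (card S) > 0" and card_VS: "real (card (V - S)) > 0"
    using False assms finite_subset_V finite_V by (auto simp: card_gt_0_iff)
  have W: "W > 0" "W = r * real (card S) + real (card (V - S))"
    using fitness_total_pos[OF assms] by (simp_all add: W_def fitness_total_def)
  have p: "0 \<le> p" "p \<le> 1" "1 - p = real (card (V - S)) / W"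
    using W fitter_mutant card_VS by (auto simp: p_def field_simps)
  have resident_nonneg: "0 \<le> phi E S - cut_weight S / real (card (V - S))"
    using cut_weight_le[of S] card_VS by (simp add: field_simps)
  have "(\<integral>\<^sup>+T. ennreal (phi E T) \<partial>measure_pmf (moran_step V E r S))
      = ennreal p * ennreal (phi E S + cut_weight S / real (card S))
        + ennreal (1 - p) * ennreal (phi E S - cut_weight S / real (card (V - S)))"
    unfolding moran_step_def W_def[symmetric] p_def[symmetric]
    using False assms p
    by (subst nn_integral_bind_pmf)
      (simp add: nn_integral_mutant_reproduces nn_integral_resident_reproduces mult.commute
        del: Un_insert_right nn_integral_bind_pmf)
  also have "\<dots> = ennreal (p * (phi E S + cut_weight S / real (card S))
        + (1 - p) * (phi E S - cut_weight S / real (card (V - S))))"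
    using p(1,2) resident_nonneg phi_nonneg[of E S] cut_weight_nonneg[of S]
    by (simp add: ennreal_plus ennreal_mult)
  also have "p * (phi E S + cut_weight S / real (card S))
        + (1 - p) * (phi E S - cut_weight S / real (card (V - S)))
      = phi E S + (r - 1) * cut_weight S / W"
  proof -
    have "p * (phi E S + cut_weight S / real (card S))
        = (r * real (card S) * phi E S + r * cut_weight S) / W"
      using card_S W(1) by (simp add: p_def field_simps)
    moreover have "(1 - p) * (phi E S - cut_weight S / real (card (V - S)))
        = (real (card (V - S)) * phi E S - cut_weight S) / W"
      using card_VS W(1) by (simp add: p(3) field_simps)
    ultimately show ?thesis
      using W by (simp add: field_simps)
  qed
  finally show ?thesis
    by (simp add: W_def)
qed

lemma cut_weight_ge:
  assumes "S \<subseteq> V" "S \<noteq> {}" "S \<noteq> V"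
  shows "1 / real (card V) ^ 2 \<le> cut_weight S"
proof -
  obtain u v where "u \<in> S" "v \<in> V" "v \<notin> S"
    using assms by auto
  then have "E\<^sup>*\<^sup>* u v"
    using connected assms(1) by (auto simp: connected_graph_def)
  then obtain x y where xy: "x \<in> S" "y \<notin> S" "E x y"
    using rtranclp_leaves_set \<open>u \<in> S\<close> \<open>v \<notin> S\<close> by metis
  then have "x \<in> V" "y \<in> V"
    using simple by (simp_all add: simple_graph_def)
  then have "0 < real (deg E x) * real (deg E y)"
    using deg_pos by simp
  moreover have "real (deg E x) * real (deg E y) \<le> real (card V) ^ 2"
    unfolding power2_eq_square using deg_le_card by (intro mult_mono) auto
  ultimately have "1 / real (card V) ^ 2 \<le> 1 / (real (deg E x) * real (deg E y))"
    by (intro frac_le) auto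
  also have "\<dots> = edge_weight x y"
    using xy by (simp add: edge_weight_def)
  also have "\<dots> \<le> (\<Sum>y\<in>V - S. edge_weight x y)"
    using xy \<open>y \<in> V\<close> finite_V by (auto intro: member_le_sum edge_weight_nonneg)
  also have "\<dots> \<le> cut_weight S"
    unfolding cut_weight_def using xy finite_subset_V[OF assms(1)]
    by (intro member_le_sum[where f = "\<lambda>x. \<Sum>y\<in>V - S. edge_weight x y"] sum_nonneg
        edge_weight_nonneg)
  finally show ?thesis .
qed

lemma expected_phi_increment_ge:
  assumes "S \<subseteq> V" "S \<noteq> {}" "S \<noteq> V"
  shows "(r - 1) / (r * real (card V) ^ 3) \<le> (r - 1) * cut_weight S / fitness_total V r S"
proof -
  have "real (card (V - S)) \<le> r * real (card (V - S))"
    using fitter_mutant by (simp add: mult_le_cancel_right1)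
  then have "fitness_total V r S \<le> r * real (card V)"
    unfolding fitness_total_def card_V_split[OF assms(1)] by (simp add: distrib_left)
  have "(r - 1) / (r * real (card V) ^ 3) = (r - 1) * (1 / real (card V) ^ 2) / (r * real (card V))"
    by (simp add: power2_eq_square power3_eq_cube)
  also have "\<dots> \<le> (r - 1) * cut_weight S / (r * real (card V))"
    using fitter_mutant two_vertices cut_weight_ge[OF assms]
    by (intro divide_right_mono mult_left_mono) auto
  also have "\<dots> \<le> (r - 1) * cut_weight S / fitness_total V r S"
    using fitter_mutant fitness_total_pos[OF assms(1)] \<open>fitness_total V r S \<le> r * real (card V)\<close>
      cut_weight_nonneg
    by (intro divide_left_mono) auto
  finally show ?thesis .
qed

lemma expected_absorption_time_le:
  assumes "x0 \<in> V"
  shows "expected_absorption_time V E r x0 \<le> ennreal (r / (r - 1) * real (card V) ^ 3 * phi E V)"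
proof -
  have "r / (r - 1) * real (card V) ^ 3 * phi E V = phi E V / ((r - 1) / (r * real (card V) ^ 3))"
    by (simp add: field_simps)
  moreover have "expected_absorption_time V E r x0
      \<le> ennreal (phi E V / ((r - 1) / (r * real (card V) ^ 3)))"
    unfolding expected_absorption_time_def
  proof (rule additive_drift_bound[where U = "Pow V" and K = "moran_step V E r"])
    show "0 < (r - 1) / (r * real (card V) ^ 3)"
      using fitter_mutant two_vertices by simp
    fix S assume "S \<in> Pow V"
    then have "S \<subseteq> V" by simp
    then show "set_pmf (moran_step V E r S) \<subseteq> Pow V" "phi E S \<le> phi E V"
      by (simp_all add: set_pmf_moran_step phi_le_phi_V)
    have "phi E S + (r - 1) / (r * real (card V) ^ 3) * indicator {S. S \<noteq> {} \<and> S \<noteq> V} S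
        \<le> phi E S + (r - 1) * cut_weight S / fitness_total V r S"
      using expected_phi_increment_ge[OF \<open>S \<subseteq> V\<close>] fitter_mutant cut_weight_nonneg
        fitness_total_pos[OF \<open>S \<subseteq> V\<close>]
      by (auto simp: indicator_def)
    then show "ennreal (phi E S + (r - 1) / (r * real (card V) ^ 3) * indicator {S. S \<noteq> {} \<and> S \<noteq> V} S)
        \<le> (\<integral>\<^sup>+T. ennreal (phi E T) \<partial>measure_pmf (moran_step V E r S))"
      unfolding nn_integral_moran_step[OF \<open>S \<subseteq> V\<close>] by (rule ennreal_leI)
  qed (simp_all add: assms phi_nonneg)
  ultimately show ?thesis
    by (simp only:)
qed

end

theorem theorem7:
  fixes V :: "'a set" and E :: "'a \<Rightarrow> 'a \<Rightarrow> bool" and r :: real and x0 :: 'a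
  assumes "simple_graph V E" and "connected_graph V E"
    and "card V \<ge> 2" and "r > 1" and "x0 \<in> V"
  shows "expected_absorption_time V E r x0
           \<le> ennreal (r / (r - 1) * real (card V) ^ 3 * phi E V)
       \<and> r / (r - 1) * real (card V) ^ 3 * phi E V \<le> r / (r - 1) * real (card V) ^ 4"
proof
  interpret moran_graph V E r
    using assms(1-4) by unfold_locales
  show "expected_absorption_time V E r x0 \<le> ennreal (r / (r - 1) * real (card V) ^ 3 * phi E V)"
    using expected_absorption_time_le[OF assms(5)] .
  have "r / (r - 1) * real (card V) ^ 3 * phi E V \<le> r / (r - 1) * real (card V) ^ 3 * real (card V)"
    using phi_le_card assms(4) by (intro mult_left_mono) auto
  then show "r / (r - 1) * real (card V) ^ 3 * phi E V \<le> r / (r - 1) * real (card V) ^ 4"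
    by (simp add: power_Suc2 numeral_eq_Suc)
qed

end
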